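(* Let $X$ be a random variable, $Z$ a random variable jointly distributed with $X$, and $f,g$ real functions with $\mathbb{E}[f(X)^2],\mathbb{E}[g(X)^2]<\infty$. Then $$\operatorname{Var}\mathbb{E}[f(X)\mid Z]-\operatorname{Var}\mathbb{E}[g(X)\mid Z]\ge\frac12\Big\{\operatorname{Var}[f(X)]-\operatorname{Var}[g(X)]-\sqrt{(\operatorname{Var}[f(X)]+\operatorname{Var}[g(X)])^2-4\operatorname{Cov}(f(X),g(X))^2}\Big\}$$ and $$\operatorname{Var}\mathbb{E}[f(X)\mid Z]-\operatorname{Var}\mathbb{E}[g(X)\mid Z]\le\frac12\Big\{\operatorname{Var}[f(X)]-\operatorname{Var}[g(X)]+\sqrt{(\operatorname{Var}[f(X)]+\operatorname{Var}[g(X)])^2-4\operatorname{Cov}(f(X),g(X))^2}\Big\}.$$ *)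

theory Defs
  imports "HOL-Probability.Probability"
begin

definition covariance :: "'a measure \<Rightarrow> ('a \<Rightarrow> real) \<Rightarrow> ('a \<Rightarrow> real) \<Rightarrow> real" where
  "covariance M U V =
     (\<integral>x. (U x - (\<integral>y. U y \<partial>M)) * (V x - (\<integral>y. V y \<partial>M)) \<partial>M)"

definition var :: "'a measure \<Rightarrow> ('a \<Rightarrow> real) \<Rightarrow> real" where
  "var M U = (\<integral>x. (U x - (\<integral>y. U y \<partial>M))\<^sup>2 \<partial>M)"

definition cond_exp_given :: "'a measure \<Rightarrow> ('a \<Rightarrow> 'c) \<Rightarrow> 'c measure \<Rightarrow> ('a \<Rightarrow> real) \<Rightarrow> ('a \<Rightarrow> real)" where
  "cond_exp_given M Z K U = real_cond_exp M (vimage_algebra (space M) Z K) U"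

end

theory Submission
  imports Defs
begin

text \<open>
  Let \<open>U = f(X)\<close>, \<open>V = g(X)\<close> and let \<open>U', V'\<close> be their conditional expectations
  given \<open>Z\<close>. The residuals \<open>U - U'\<close>, \<open>V - V'\<close> are orthogonal to every \<open>Z\<close>-measurable
  square-integrable variable, so \<open>Var U = p + p'\<close>, \<open>Var V = q + q'\<close>, \<open>Cov(U,V) = r + r'\<close>,
  where \<open>p, q, r\<close> are the variances and covariance of \<open>U', V'\<close> and \<open>p', q', r'\<close> the
  second moments of the residuals. Cauchy-Schwarz gives \<open>r\<^sup>2 \<le> p q\<close> and \<open>r'\<^sup>2 \<le> p' q'\<close>,
  hence \<open>(r + r')\<^sup>2 \<le> (p + q') (q + p')\<close>; since
  \<open>((p + q') - (q + p'))\<^sup>2 = (Var U + Var V)\<^sup>2 - 4 (p + q') (q + p')\<close>, this bounds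
  \<open>|2 (p - q) - (Var U - Var V)| = |(p + q') - (q + p')|\<close> by the square root in the claim.
\<close>

lemma square_le_mult_if_quadratic_nonneg:
  fixes A B C :: real
  assumes nonneg: "\<And>t. 0 \<le> A + 2 * t * B + t\<^sup>2 * C" and "0 \<le> C"
  shows "B\<^sup>2 \<le> A * C"
proof (cases "C = 0")
  case True
  have "B = 0"
  proof (rule ccontr)
    assume "B \<noteq> 0"
    then have "A + 2 * (- (A + 1) / (2 * B)) * B + (- (A + 1) / (2 * B))\<^sup>2 * C = -1"
      using True by (simp add: field_simps)
    then show False using nonneg[of "- (A + 1) / (2 * B)"] by linarith
  qed
  then show ?thesis using True by simp
next
  case False
  with \<open>0 \<le> C\<close> have "0 < C" by simp
  have "A + 2 * (- B / C) * B + (- B / C)\<^sup>2 * C = (A * C - B\<^sup>2) / C"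
    using \<open>0 < C\<close> by (simp add: field_simps power2_eq_square)
  then have "0 \<le> (A * C - B\<^sup>2) / C" using nonneg[of "- B / C"] by simp
  with \<open>0 < C\<close> show ?thesis by (simp add: zero_le_divide_iff)
qed

lemma add_square_le_cross_mult:
  fixes p q p' q' r r' :: real
  assumes "0 \<le> p" "0 \<le> q" "0 \<le> p'" "0 \<le> q'" "r\<^sup>2 \<le> p * q" "r'\<^sup>2 \<le> p' * q'"
  shows "(r + r')\<^sup>2 \<le> (p + q') * (q + p')"
proof -
  have "(r * r')\<^sup>2 \<le> (p * p') * (q * q')"
    using mult_mono[OF assms(5,6)] assms(1-4) by (simp add: power_mult_distrib mult_ac)
  also have "\<dots> \<le> ((p * p' + q * q') / 2)\<^sup>2"
    using zero_le_square[of "p * p' - q * q'"] by (simp add: power2_eq_square algebra_simps)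
  finally have "r * r' \<le> (p * p' + q * q') / 2"
    by (rule power2_le_imp_le) (use assms(1-4) in simp)
  then show ?thesis using assms(5,6) by (simp add: power2_eq_square algebra_simps)
qed

lemma abs_diff_split_le_sqrt:
  fixes p q p' q' r r' :: real
  assumes "0 \<le> p" "0 \<le> q" "0 \<le> p'" "0 \<le> q'" "r\<^sup>2 \<le> p * q" "r'\<^sup>2 \<le> p' * q'"
  shows "\<bar>2 * (p - q) - ((p + p') - (q + q'))\<bar> \<le> sqrt (((p + p') + (q + q'))\<^sup>2 - 4 * (r + r')\<^sup>2)"
proof -
  have "((p + q') - (q + p'))\<^sup>2 = ((p + p') + (q + q'))\<^sup>2 - 4 * ((p + q') * (q + p'))"
    by (simp add: power2_eq_square algebra_simps)
  also have "\<dots> \<le> ((p + p') + (q + q'))\<^sup>2 - 4 * (r + r')\<^sup>2"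
    using add_square_le_cross_mult[OF assms] by simp
  finally have "sqrt (((p + q') - (q + p'))\<^sup>2) \<le> sqrt (((p + p') + (q + q'))\<^sup>2 - 4 * (r + r')\<^sup>2)"
    by (rule real_sqrt_le_mono)
  then show ?thesis by (simp add: algebra_simps)
qed

lemma square_integrable_imp_integrable_mult:
  fixes f g :: "'a \<Rightarrow> real"
  assumes [measurable]: "f \<in> borel_measurable M" "g \<in> borel_measurable M"
    and "integrable M (\<lambda>x. (f x)\<^sup>2)" "integrable M (\<lambda>x. (g x)\<^sup>2)"
  shows "integrable M (\<lambda>x. f x * g x)"
proof (rule Bochner_Integration.integrable_bound)
  show "integrable M (\<lambda>x. (f x)\<^sup>2 + (g x)\<^sup>2)" using assms by simp
  show "AE x in M. norm (f x * g x) \<le> norm ((f x)\<^sup>2 + (g x)\<^sup>2)"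
  proof (rule AE_I2)
    fix x
    have "2 * (\<bar>f x\<bar> * \<bar>g x\<bar>) \<le> (f x)\<^sup>2 + (g x)\<^sup>2"
      using zero_le_square[of "\<bar>f x\<bar> - \<bar>g x\<bar>"] by (simp add: power2_eq_square algebra_simps)
    moreover have "0 \<le> \<bar>f x\<bar> * \<bar>g x\<bar>" by simp
    moreover have "norm (f x * g x) = \<bar>f x\<bar> * \<bar>g x\<bar>" by (simp add: abs_mult)
    ultimately show "norm (f x * g x) \<le> norm ((f x)\<^sup>2 + (g x)\<^sup>2)" by simp
  qed
qed simp

lemma square_integrable_diff:
  fixes f g :: "'a \<Rightarrow> real"
  assumes [measurable]: "f \<in> borel_measurable M" "g \<in> borel_measurable M"
    and "integrable M (\<lambda>x. (f x)\<^sup>2)" "integrable M (\<lambda>x. (g x)\<^sup>2)"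
  shows "integrable M (\<lambda>x. (f x - g x)\<^sup>2)"
proof -
  have "integrable M (\<lambda>x. (f x)\<^sup>2 - 2 * (f x * g x) + (g x)\<^sup>2)"
    using assms square_integrable_imp_integrable_mult[OF assms] by simp
  then show ?thesis by (simp add: power2_eq_square algebra_simps)
qed

lemma Cauchy_Schwarz_integral:
  fixes f g :: "'a \<Rightarrow> real"
  assumes [measurable]: "f \<in> borel_measurable M" "g \<in> borel_measurable M"
    and "integrable M (\<lambda>x. (f x)\<^sup>2)" "integrable M (\<lambda>x. (g x)\<^sup>2)"
  shows "(\<integral>x. f x * g x \<partial>M)\<^sup>2 \<le> (\<integral>x. (f x)\<^sup>2 \<partial>M) * (\<integral>x. (g x)\<^sup>2 \<partial>M)"
proof (rule square_le_mult_if_quadratic_nonneg)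
  fix t :: real
  have "0 \<le> (\<integral>x. (f x + t * g x)\<^sup>2 \<partial>M)" by simp
  also have "\<dots> = (\<integral>x. (f x)\<^sup>2 + 2 * t * (f x * g x) + t\<^sup>2 * (g x)\<^sup>2 \<partial>M)"
    by (simp add: power2_eq_square algebra_simps)
  also have "\<dots> = (\<integral>x. (f x)\<^sup>2 \<partial>M) + 2 * t * (\<integral>x. f x * g x \<partial>M) + t\<^sup>2 * (\<integral>x. (g x)\<^sup>2 \<partial>M)"
    using assms square_integrable_imp_integrable_mult[OF assms] by simp
  finally show "0 \<le> (\<integral>x. (f x)\<^sup>2 \<partial>M) + 2 * t * (\<integral>x. f x * g x \<partial>M) + t\<^sup>2 * (\<integral>x. (g x)\<^sup>2 \<partial>M)" .
qed simp

lemma var_eq_covariance: "var M U = covariance M U U"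
  by (simp add: var_def covariance_def power2_eq_square)

lemma (in prob_space) covariance_eq:
  fixes x y :: "'a \<Rightarrow> real"
  assumes "integrable M x" "integrable M y" "integrable M (\<lambda>z. x z * y z)"
  shows "covariance M x y = (\<integral>z. x z * y z \<partial>M) - (\<integral>z. x z \<partial>M) * (\<integral>z. y z \<partial>M)"
proof -
  have "covariance M x y = (\<integral>z. x z * y z - (\<integral>w. y w \<partial>M) * x z - (\<integral>w. x w \<partial>M) * y z
                                + (\<integral>w. x w \<partial>M) * (\<integral>w. y w \<partial>M) \<partial>M)"
    unfolding covariance_def by (simp add: algebra_simps)
  also have "\<dots> = (\<integral>z. x z * y z \<partial>M) - (\<integral>z. x z \<partial>M) * (\<integral>z. y z \<partial>M)"
    using assms by (simp add: prob_space)
  finally show ?thesis .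
qed

lemma (in prob_space) covariance_square_le:
  fixes x y :: "'a \<Rightarrow> real"
  assumes [measurable]: "x \<in> borel_measurable M" "y \<in> borel_measurable M"
    and "integrable M (\<lambda>z. (x z)\<^sup>2)" "integrable M (\<lambda>z. (y z)\<^sup>2)"
  shows "(covariance M x y)\<^sup>2 \<le> var M x * var M y"
proof -
  have "integrable M (\<lambda>z. (x z - c)\<^sup>2)" "integrable M (\<lambda>z. (y z - c)\<^sup>2)" for c
    by (rule square_integrable_diff; simp add: assms)+
  then show ?thesis
    unfolding covariance_def var_def by (intro Cauchy_Schwarz_integral) simp_all
qed

lemma (in sigma_finite_subalgebra) square_integrable_real_cond_exp:
  fixes u :: "'a \<Rightarrow> real"
  assumes "integrable M u" "integrable M (\<lambda>x. (u x)\<^sup>2)"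
  shows "integrable M (\<lambda>x. (real_cond_exp M F u x)\<^sup>2)"
  using integrable_convex_cond_exp[of u UNIV 0 0 "\<lambda>x. x\<^sup>2"] assms by (simp add: convex_power2)

lemma (in finite_measure_subalgebra) integral_residual_mult_real_cond_exp:
  fixes u v :: "'a \<Rightarrow> real"
  assumes [measurable]: "u \<in> borel_measurable M" "v \<in> borel_measurable M"
    and "integrable M (\<lambda>x. (u x)\<^sup>2)" "integrable M (\<lambda>x. (v x)\<^sup>2)"
  defines "u' \<equiv> real_cond_exp M F u" and "v' \<equiv> real_cond_exp M F v"
  shows "(\<integral>x. (u x - u' x) * (v x - v' x) \<partial>M) = (\<integral>x. u x * v x \<partial>M) - (\<integral>x. u' x * v' x \<partial>M)"
proof -
  have u'F [measurable]: "u' \<in> borel_measurable F" and v'F [measurable]: "v' \<in> borel_measurable F"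
    unfolding u'_def v'_def by simp_all
  have [measurable]: "u' \<in> borel_measurable M" "v' \<in> borel_measurable M"
    unfolding u'_def v'_def by simp_all
  have "integrable M (\<lambda>x. (u' x)\<^sup>2)" "integrable M (\<lambda>x. (v' x)\<^sup>2)"
    unfolding u'_def v'_def
    using assms square_integrable_imp_integrable[OF assms(1,3)] square_integrable_imp_integrable[OF assms(2,4)]
    by (simp_all add: square_integrable_real_cond_exp)
  then have integrable_mult: "integrable M (\<lambda>x. a x * b x)"
    if "a \<in> {u, v, u', v'}" "b \<in> {u, v, u', v'}" for a b
    using that assms by (auto intro!: square_integrable_imp_integrable_mult)
  have "(\<integral>x. u' x * v x \<partial>M) = (\<integral>x. u' x * v' x \<partial>M)"
    using real_cond_exp_intg(2)[OF integrable_mult u'F, of v] unfolding v'_def by simp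
  moreover have "(\<integral>x. v' x * u x \<partial>M) = (\<integral>x. u' x * v' x \<partial>M)"
    using real_cond_exp_intg(2)[OF integrable_mult v'F, of u] unfolding u'_def by (simp add: mult.commute)
  moreover have "(\<integral>x. (u x - u' x) * (v x - v' x) \<partial>M)
      = (\<integral>x. u x * v x \<partial>M) - (\<integral>x. v' x * u x \<partial>M) - (\<integral>x. u' x * v x \<partial>M) + (\<integral>x. u' x * v' x \<partial>M)"
    using integrable_mult[of u v] integrable_mult[of v' u] integrable_mult[of u' v] integrable_mult[of u' v']
    by (simp add: algebra_simps)
  ultimately show ?thesis by simp
qed

lemma (in prob_space) covariance_real_cond_exp_split:
  fixes u v :: "'a \<Rightarrow> real"
  assumes "subalgebra M F"
    and [measurable]: "u \<in> borel_measurable M" "v \<in> borel_measurable M"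
    and "integrable M (\<lambda>x. (u x)\<^sup>2)" "integrable M (\<lambda>x. (v x)\<^sup>2)"
  defines "u' \<equiv> real_cond_exp M F u" and "v' \<equiv> real_cond_exp M F v"
  shows "covariance M u v = covariance M u' v' + (\<integral>x. (u x - u' x) * (v x - v' x) \<partial>M)"
proof -
  interpret finite_measure_subalgebra M F by unfold_locales (rule assms(1))
  have u: "integrable M u" and v: "integrable M v"
    using square_integrable_imp_integrable assms(2-5) by blast+
  have "covariance M u v = (\<integral>x. u x * v x \<partial>M) - (\<integral>x. u x \<partial>M) * (\<integral>x. v x \<partial>M)"
    using assms u v by (intro covariance_eq square_integrable_imp_integrable_mult)
  moreover have "covariance M u' v' = (\<integral>x. u' x * v' x \<partial>M) - (\<integral>x. u x \<partial>M) * (\<integral>x. v x \<partial>M)"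
  proof -
    have "integrable M (\<lambda>x. u' x * v' x)"
      unfolding u'_def v'_def using assms u v
      by (intro square_integrable_imp_integrable_mult square_integrable_real_cond_exp) simp_all
    then show ?thesis
      unfolding u'_def v'_def
      using covariance_eq[OF real_cond_exp_int(1)[OF u] real_cond_exp_int(1)[OF v]]
      by (simp add: real_cond_exp_int(2)[OF u] real_cond_exp_int(2)[OF v])
  qed
  ultimately show ?thesis
    using integral_residual_mult_real_cond_exp[OF assms(2-5)] unfolding u'_def v'_def by simp
qed

lemma (in prob_space) var_real_cond_exp_diff_bound:
  fixes u v :: "'a \<Rightarrow> real"
  assumes "subalgebra M F"
    and [measurable]: "u \<in> borel_measurable M" "v \<in> borel_measurable M"
    and "integrable M (\<lambda>x. (u x)\<^sup>2)" "integrable M (\<lambda>x. (v x)\<^sup>2)"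
  shows "\<bar>2 * (var M (real_cond_exp M F u) - var M (real_cond_exp M F v)) - (var M u - var M v)\<bar>
           \<le> sqrt ((var M u + var M v)\<^sup>2 - 4 * (covariance M u v)\<^sup>2)"
proof -
  interpret finite_measure_subalgebra M F by unfold_locales (rule assms(1))
  define u' v' where "u' = real_cond_exp M F u" and "v' = real_cond_exp M F v"
  have [measurable]: "u' \<in> borel_measurable M" "v' \<in> borel_measurable M"
    unfolding u'_def v'_def by simp_all
  have "integrable M u" "integrable M v"
    using square_integrable_imp_integrable assms(2-5) by blast+
  then have "integrable M (\<lambda>x. (u' x)\<^sup>2)" "integrable M (\<lambda>x. (v' x)\<^sup>2)"
    unfolding u'_def v'_def using assms by (simp_all add: square_integrable_real_cond_exp)
  then have residuals: "integrable M (\<lambda>x. (u x - u' x)\<^sup>2)" "integrable M (\<lambda>x. (v x - v' x)\<^sup>2)"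
    using assms by (simp_all add: square_integrable_diff)
  have var_u: "var M u = var M u' + (\<integral>x. (u x - u' x)\<^sup>2 \<partial>M)"
    using covariance_real_cond_exp_split[OF assms(1,2,2,4,4)]
    by (simp add: var_eq_covariance u'_def power2_eq_square)
  have var_v: "var M v = var M v' + (\<integral>x. (v x - v' x)\<^sup>2 \<partial>M)"
    using covariance_real_cond_exp_split[OF assms(1,3,3,5,5)]
    by (simp add: var_eq_covariance v'_def power2_eq_square)
  have cov_uv: "covariance M u v = covariance M u' v' + (\<integral>x. (u x - u' x) * (v x - v' x) \<partial>M)"
    using covariance_real_cond_exp_split[OF assms] by (simp add: u'_def v'_def)
  show ?thesis
    unfolding var_u var_v cov_uv u'_def[symmetric] v'_def[symmetric]
  proof (rule abs_diff_split_le_sqrt)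
    show "(covariance M u' v')\<^sup>2 \<le> var M u' * var M v'"
      by (rule covariance_square_le) fact+
    show "(\<integral>x. (u x - u' x) * (v x - v' x) \<partial>M)\<^sup>2
            \<le> (\<integral>x. (u x - u' x)\<^sup>2 \<partial>M) * (\<integral>x. (v x - v' x)\<^sup>2 \<partial>M)"
      by (rule Cauchy_Schwarz_integral) (simp_all add: residuals)
  qed (simp_all add: var_def)
qed

theorem lemma5:
  fixes M :: "'a measure" and N :: "'b measure" and K :: "'c measure"
    and X :: "'a \<Rightarrow> 'b" and Z :: "'a \<Rightarrow> 'c" and f g :: "'b \<Rightarrow> real"
  assumes "prob_space M"
    and "X \<in> measurable M N" and "Z \<in> measurable M K"
    and "f \<in> borel_measurable N" and "g \<in> borel_measurable N"
    and "integrable M (\<lambda>x. (f (X x))\<^sup>2)" and "integrable M (\<lambda>x. (g (X x))\<^sup>2)"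
  shows "var M (cond_exp_given M Z K (\<lambda>x. f (X x))) - var M (cond_exp_given M Z K (\<lambda>x. g (X x)))
           \<ge> (1/2) * (var M (\<lambda>x. f (X x)) - var M (\<lambda>x. g (X x))
              - sqrt ((var M (\<lambda>x. f (X x)) + var M (\<lambda>x. g (X x)))\<^sup>2
                      - 4 * (covariance M (\<lambda>x. f (X x)) (\<lambda>x. g (X x)))\<^sup>2))
    \<and> var M (cond_exp_given M Z K (\<lambda>x. f (X x))) - var M (cond_exp_given M Z K (\<lambda>x. g (X x)))
           \<le> (1/2) * (var M (\<lambda>x. f (X x)) - var M (\<lambda>x. g (X x))
              + sqrt ((var M (\<lambda>x. f (X x)) + var M (\<lambda>x. g (X x)))\<^sup>2
                      - 4 * (covariance M (\<lambda>x. f (X x)) (\<lambda>x. g (X x)))\<^sup>2))"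
proof -
  interpret prob_space M by fact
  define U V where "U = (\<lambda>x. f (X x))" and "V = (\<lambda>x. g (X x))"
  have "subalgebra M (vimage_algebra (space M) Z K)"
    using \<open>Z \<in> measurable M K\<close> by (simp add: subalgebra_def measurable_iff_sets)
  moreover have "U \<in> borel_measurable M" "V \<in> borel_measurable M"
    unfolding U_def V_def using assms(2,4,5) by measurable
  moreover have "integrable M (\<lambda>x. (U x)\<^sup>2)" "integrable M (\<lambda>x. (V x)\<^sup>2)"
    unfolding U_def V_def by fact+
  ultimately have "\<bar>2 * (var M (cond_exp_given M Z K U) - var M (cond_exp_given M Z K V)) - (var M U - var M V)\<bar>
                     \<le> sqrt ((var M U + var M V)\<^sup>2 - 4 * (covariance M U V)\<^sup>2)"
    unfolding cond_exp_given_def by (rule var_real_cond_exp_diff_bound)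
  then show ?thesis
    unfolding U_def V_def by (simp add: abs_le_iff field_simps)
qed

end
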